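(* Let $d\ge 1$ and let $F$ be a $d$-uniform Ferrers hypergraph with vertex sets $X^{(j)}=\{1,\dots,n_j\}$, $1\le j\le d$, and let $I(F)$ be its Ferrers ideal. For $k\ge 0$ put \[ \alpha_k(F):=\#\Big\{(i_1,\dots,i_d)\in F : \textstyle\sum_{j=1}^d i_j = k+d\Big\}. \] Then the Boij–Söderberg decomposition of the Betti table of $I(F)$ is \[ \beta(I(F))=\sum_{k\ge 0}\alpha_k(F)\, k!\ \pi^{d,k}, \] where $\pi^{d,k}$ denotes the pure diagram with degree sequence $(d,d+1,\dots,d+k)$.
   Context: All modules are finitely generated graded modules over a standard graded polynomial ring over a field $K$. The Betti table of $M$ is the matrix $\beta(M)=(\beta_{i,j}(M))$, $\beta_{i,j}(M)=\dim_K[\operatorname{Tor}_i(M,K)]_j$, with $i$ the homological and $j$ the internal degree. For an increasing integer sequence $\sigma=(d_0,\dots,d_s)$, the pure diagram $\pi_\sigma$ is the table with entries $\beta_{i,j}=\prod_{0\le l\le s,\ l\ne i}\frac{1}{|d_i-d_l|}$ if $j=d_i$ and $\beta_{i,j}=0$ otherwise. A $d$-uniform Ferrers hypergraph on $X^{(1)}\sqcup\dots\sqcup X^{(d)}$ (each $X^{(j)}=\{1,\dots,n_j\}$ linearly ordered) is a set $F\subseteq X^{(1)}\times\dots\times X^{(d)}$ such that $(i_1,\dots,i_d)\in F$ and $i'_j\le i_j$ for all $j$ imply $(i'_1,\dots,i'_d)\in F$. Its Ferrers ideal $I(F)\subset K[x^{(j)}_i : 1\le j\le d,\ i\in X^{(j)}]$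 is generated by the monomials $x^{(1)}_{i_1}\cdots x^{(d)}_{i_d}$ with $(i_1,\dots,i_d)\in F$. (Graded Betti numbers are unchanged by adjoining further variables.) The Boij–Söderberg decomposition is the unique expression $\beta(M)=\sum a_i\pi_{\sigma_i}$ with positive integers $a_i$ and $\pi_{\sigma_1}<\dots<\pi_{\sigma_t}$ in the partial order where $\pi_{(d_0,\dots,d_s)}\le\pi_{(d'_0,\dots,d'_{s'})}$ iff $s\ge s'$ and $d_i\le d'_i$ for $i\le s'$. *)

theory Defs
  imports Complex_Main
begin

text \<open>A matrix with rows indexed by Tgt and columns indexed by Src, entry A s t.
  Its rank is the maximal number of linearly independent columns.\<close>
definition colrank :: "('a \<Rightarrow> 'b \<Rightarrow> 'k::field) \<Rightarrow> 'a set \<Rightarrow> 'b set \<Rightarrow> nat" where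
  "colrank A Src Tgt = Max {card T | T. T \<subseteq> Src \<and>
     (\<forall>c::'a \<Rightarrow> 'k. (\<forall>y\<in>Tgt. (\<Sum>t\<in>T. c t * A t y) = 0) \<longrightarrow> (\<forall>t\<in>T. c t = 0))}"

text \<open>A monomial ideal is given by
  its membership predicate on monomials (it is spanned over K by these monomials).\<close>

definition var_less :: "nat \<times> nat \<Rightarrow> nat \<times> nat \<Rightarrow> bool" where
  "var_less w v \<longleftrightarrow> fst w < fst v \<or> (fst w = fst v \<and> snd w < snd v)"

text \<open>K-basis of the multidegree-b part of I \<otimes> \<Lambda>^i K^V: elements u \<otimes> e_S with
  u a monomial of I, S a set of i variables, u * x_S = x^b.\<close>
definition koszul_basis ::
  "(nat \<times> nat) set \<Rightarrow> ((nat \<times> nat \<Rightarrow> nat) \<Rightarrow> bool) \<Rightarrow> nat \<Rightarrow> (nat \<times> nat \<Rightarrow> nat) \<Rightarrow> (nat \<times> nat) set set" where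
  "koszul_basis V inI i b = {S. S \<subseteq> V \<and> card S = i \<and> (\<forall>v\<in>S. 1 \<le> b v) \<and>
      inI (\<lambda>v. if v \<in> S then b v - 1 else b v)}"

text \<open>Koszul differential: u \<otimes> e_S \<mapsto> \<Sum>_{v\<in>S} (-1)^{pos} (u x_v) \<otimes> e_{S-{v}}.\<close>
definition koszul_diff :: "(nat \<times> nat) set \<Rightarrow> (nat \<times> nat) set \<Rightarrow> 'k::field" where
  "koszul_diff S T = (\<Sum>v\<in>S. if T = S - {v} then (-1) ^ card {w\<in>S. var_less w v} else 0)"

definition koszul_rank ::
  "'k::field itself \<Rightarrow> (nat \<times> nat) set \<Rightarrow> ((nat \<times> nat \<Rightarrow> nat) \<Rightarrow> bool) \<Rightarrow> nat \<Rightarrow> (nat \<times> nat \<Rightarrow> nat) \<Rightarrow> nat" where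
  "koszul_rank K V inI i b = (if i = 0 then 0 else
      colrank (koszul_diff :: _ \<Rightarrow> _ \<Rightarrow> 'k) (koszul_basis V inI i b) (koszul_basis V inI (i - 1) b))"

text \<open>dim_K Tor_i(I,K)_b = dim H_i of the Koszul complex in multidegree b.\<close>
definition multigraded_betti ::
  "'k::field itself \<Rightarrow> (nat \<times> nat) set \<Rightarrow> ((nat \<times> nat \<Rightarrow> nat) \<Rightarrow> bool) \<Rightarrow> nat \<Rightarrow> (nat \<times> nat \<Rightarrow> nat) \<Rightarrow> nat" where
  "multigraded_betti K V inI i b =
     card (koszul_basis V inI i b) - koszul_rank K V inI i b - koszul_rank K V inI (Suc i) b"

text \<open>Graded Betti table: betti K V inI i j = dim_K [Tor_i(I,K)]_j.\<close>
definition betti ::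
  "'k::field itself \<Rightarrow> (nat \<times> nat) set \<Rightarrow> ((nat \<times> nat \<Rightarrow> nat) \<Rightarrow> bool) \<Rightarrow> nat \<Rightarrow> int \<Rightarrow> rat" where
  "betti K V inI i j = of_nat (\<Sum>b \<in> {b. (\<forall>v. v \<notin> V \<longrightarrow> b v = 0) \<and> int (\<Sum>v\<in>V. b v) = j}.
      multigraded_betti K V inI i b)"

definition pure_diagram :: "int list \<Rightarrow> nat \<Rightarrow> int \<Rightarrow> rat" where
  "pure_diagram \<sigma> i j = (if i < length \<sigma> \<and> j = \<sigma> ! i
     then (\<Prod>l \<in> {0..<length \<sigma>} - {i}. 1 / of_int \<bar>\<sigma> ! i - \<sigma> ! l\<bar>) else 0)"

definition is_degree_seq :: "int list \<Rightarrow> bool" where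
  "is_degree_seq \<sigma> \<longleftrightarrow> \<sigma> \<noteq> [] \<and> sorted_wrt (<) \<sigma>"

definition pure_le :: "int list \<Rightarrow> int list \<Rightarrow> bool" where
  "pure_le \<sigma> \<sigma>' \<longleftrightarrow> length \<sigma>' \<le> length \<sigma> \<and> (\<forall>i < length \<sigma>'. \<sigma> ! i \<le> \<sigma>' ! i)"

definition bs_decomposition :: "(nat \<Rightarrow> int \<Rightarrow> rat) \<Rightarrow> (nat \<times> int list) list \<Rightarrow> bool" where
  "bs_decomposition \<beta> L \<longleftrightarrow>
     (\<forall>(a, \<sigma>) \<in> set L. 0 < a \<and> is_degree_seq \<sigma>) \<and>
     sorted_wrt (\<lambda>x y. pure_le (snd x) (snd y) \<and> snd x \<noteq> snd y) L \<and>
     (\<forall>i j. \<beta> i j = (\<Sum>(a, \<sigma>) \<leftarrow> L. of_nat a * pure_diagram \<sigma> i j))"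

text \<open>d = length n; X^(j+1) = {1..n!j} for j < d (0-based index j).
  Edges are lists p of length d, p!j \<in> X^(j+1).\<close>
definition ferrers_vars :: "nat list \<Rightarrow> (nat \<times> nat) set" where
  "ferrers_vars n = {(j, i). j < length n \<and> 1 \<le> i \<and> i \<le> n ! j}"

definition is_ferrers :: "nat list \<Rightarrow> nat list set \<Rightarrow> bool" where
  "is_ferrers n F \<longleftrightarrow>
     (\<forall>p\<in>F. length p = length n \<and> (\<forall>j < length n. 1 \<le> p ! j \<and> p ! j \<le> n ! j)) \<and>
     (\<forall>p\<in>F. \<forall>q. length q = length n \<and> (\<forall>j < length n. 1 \<le> q ! j \<and> q ! j \<le> p ! j) \<longrightarrow> q \<in> F)"

text \<open>A monomial lies in I(F) iff it is divisible by some generator x^(1)_{p1}...x^(d)_{pd}.\<close>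
definition ferrers_mem :: "nat list set \<Rightarrow> (nat \<times> nat \<Rightarrow> nat) \<Rightarrow> bool" where
  "ferrers_mem F u \<longleftrightarrow> (\<exists>p\<in>F. \<forall>j < length p. 1 \<le> u (j, p ! j))"

definition alpha :: "nat list set \<Rightarrow> nat \<Rightarrow> nat \<Rightarrow> nat" where
  "alpha F d k = card {p \<in> F. sum_list p = k + d}"

end

theory Submission
  imports Defs "HOL-Library.Product_Lexorder" "HOL-Library.Indicator_Function"
begin

text \<open>The multigraded Betti numbers are read off the Koszul complex with the help of acyclic
  matchings (discrete Morse theory). In a multidegree that is not squarefree, toggling a variable of
  exponent at least 2 matches every Koszul cell, so nothing survives. In the squarefree multidegree
  of a set \<open>B\<close> of variables, toggling a variable that lies above the lowest free variable of its
  column leaves at most one critical cell, namely \<open>B\<close> minus its column maxima; it exists iff the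
  column maxima form an edge of \<open>F\<close>, and it sits in the top homological degree
  \<open>|B| - d\<close>, where a signed sum of all cells is a cycle. So \<open>\<beta>\<^sub>i\<close> counts the sets of
  \<open>i + d\<close> variables spanning an edge, all in degree \<open>i + d\<close>; grouping them by their column
  maxima \<open>p \<in> F\<close> gives \<open>\<Sum>\<^sub>p binomial (|p| - d) i = \<Sum>\<^sub>k \<alpha>\<^sub>k binomial k i\<close>, which is the
  entry of \<open>\<Sum>\<^sub>k \<alpha>\<^sub>k k! \<pi>\<^sup>d\<^sup>,\<^sup>k\<close> at \<open>(i, d + i)\<close>.\<close>

section \<open>Column rank\<close>

definition columns_independent :: "('a \<Rightarrow> 'b \<Rightarrow> 'k::field) \<Rightarrow> 'a set \<Rightarrow> 'b set \<Rightarrow> bool" where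
  "columns_independent A T Tgt \<longleftrightarrow>
     (\<forall>c::'a \<Rightarrow> 'k. (\<forall>y\<in>Tgt. (\<Sum>t\<in>T. c t * A t y) = 0) \<longrightarrow> (\<forall>t\<in>T. c t = 0))"

lemma colrank_eq_Max_independent:
  "colrank A Src Tgt = Max {card T | T. T \<subseteq> Src \<and> columns_independent A T Tgt}"
  unfolding colrank_def columns_independent_def by simp

lemma finite_independent_cards:
  "finite Src \<Longrightarrow> finite {card T | T. T \<subseteq> Src \<and> columns_independent A T Tgt}"
  by (rule finite_subset[of _ "card ` Pow Src"]) auto

lemma card_le_colrank:
  assumes "finite Src" "U \<subseteq> Src" "columns_independent A U Tgt"
  shows "card U \<le> colrank A Src Tgt"
  unfolding colrank_eq_Max_independent
  using assms finite_independent_cards by (intro Max_ge) blast+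

lemma colrank_less_card:
  assumes "finite Src" "\<not> columns_independent A Src Tgt"
  shows "colrank A Src Tgt < card Src"
  unfolding colrank_eq_Max_independent
proof (subst Max_less_iff)
  show "finite {card T | T. T \<subseteq> Src \<and> columns_independent A T Tgt}"
    using assms(1) by (rule finite_independent_cards)
  have "columns_independent A {} Tgt" unfolding columns_independent_def by simp
  then show "{card T | T. T \<subseteq> Src \<and> columns_independent A T Tgt} \<noteq> {}" by blast
  show "\<forall>x\<in>{card T | T. T \<subseteq> Src \<and> columns_independent A T Tgt}. x < card Src"
    using assms by (auto intro!: psubset_card_mono)
qed

lemma colrank_empty [simp]: "colrank A {} Tgt = 0"
  unfolding colrank_eq_Max_independent columns_independent_def by simp

section \<open>The Koszul complex of a monomial ideal\<close>

lemma var_less_iff_less: "var_less w v \<longleftrightarrow> w < v"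
  unfolding var_less_def less_prod_def by auto

lemma koszul_diff_remove:
  assumes "finite S" "v \<in> S"
  shows "koszul_diff S (S - {v}) = ((-1) ^ card {w\<in>S. w < v} :: 'k::field)"
proof -
  have "koszul_diff S (S - {v}) =
      (\<Sum>u\<in>S. if u = v then ((-1) ^ card {w\<in>S. w < u} :: 'k) else 0)"
    unfolding koszul_diff_def var_less_iff_less using assms by (intro sum.cong) auto
  then show ?thesis using assms by simp
qed

lemma koszul_diff_insert:
  assumes "finite y" "v \<notin> y"
  shows "koszul_diff (insert v y) y = ((-1) ^ card {w\<in>y. w < v} :: 'k::field)"
proof -
  have "{w \<in> insert v y. w < v} = {w\<in>y. w < v}" by auto
  then show ?thesis using koszul_diff_remove[of "insert v y" v] assms by simp
qed

lemma koszul_diff_nonzero_imp: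
  assumes "(koszul_diff S T :: 'k::field) \<noteq> 0"
  obtains v where "v \<in> S" "T = S - {v}"
proof -
  have "\<exists>v\<in>S. T = S - {v}"
  proof (rule ccontr)
    assume "\<not> (\<exists>v\<in>S. T = S - {v})"
    then have "(koszul_diff S T :: 'k) = 0" unfolding koszul_diff_def by (intro sum.neutral) auto
    with assms show False by simp
  qed
  with that show thesis by blast
qed

lemma multigraded_betti_itself: "multigraded_betti (K :: 'k::field itself) = multigraded_betti TYPE('k)"
  unfolding multigraded_betti_def koszul_rank_def ..

lemma finite_koszul_basis: "finite V \<Longrightarrow> finite (koszul_basis V inI k b)"
  unfolding koszul_basis_def by (rule finite_subset[of _ "Pow V"]) auto

lemma koszul_basis_finite_elem: "finite V \<Longrightarrow> S \<in> koszul_basis V inI k b \<Longrightarrow> finite S"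
  unfolding koszul_basis_def using finite_subset by auto

lemma card_koszul_basis_elem: "S \<in> koszul_basis V inI k b \<Longrightarrow> card S = k"
  unfolding koszul_basis_def by auto

definition koszul_sign :: "(nat \<times> nat) set \<Rightarrow> (nat \<times> nat) set \<Rightarrow> 'k::field" where
  "koszul_sign B t = (-1) ^ (\<Sum>r\<in>t. card {w\<in>B. w < r})"

text \<open>With these signs, two cofaces of \<open>y\<close> whose new variables are separated in \<open>B\<close> only by
  variables of \<open>y\<close> cancel in the boundary of the signed sum of all cells.\<close>

lemma koszul_sign_cancel:
  assumes "finite B" "y \<subseteq> B" "v1 \<in> B - y" "v2 \<in> B - y" "v1 < v2"
    and between: "\<And>w. w \<in> B \<Longrightarrow> v1 < w \<Longrightarrow> w < v2 \<Longrightarrow> w \<in> y"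
  shows "koszul_sign B (insert v1 y) * koszul_diff (insert v1 y) y +
         koszul_sign B (insert v2 y) * koszul_diff (insert v2 y) y = (0::'k::field)"
proof -
  define M where "M = {w\<in>B. v1 < w \<and> w < v2}"
  have "finite y" "finite M" using assms(1,2) finite_subset unfolding M_def by auto
  have "{w\<in>B. w < v2} = insert v1 ({w\<in>B. w < v1} \<union> M)"
    using assms(3,5) unfolding M_def by auto
  moreover have "card ({w\<in>B. w < v1} \<union> M) = card {w\<in>B. w < v1} + card M"
    using \<open>finite M\<close> assms(1) by (intro card_Un_disjoint) (auto simp: M_def)
  ultimately have rank_v2: "card {w\<in>B. w < v2} = Suc (card {w\<in>B. w < v1} + card M)"
    using \<open>finite M\<close> assms(1) by (simp add: M_def)
  have "{w\<in>y. w < v2} = {w\<in>y. w < v1} \<union> M"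
  proof (intro equalityI subsetI)
    fix w assume "w \<in> {w\<in>y. w < v2}"
    moreover have "w \<noteq> v1" if "w \<in> y" using that assms(3) by auto
    ultimately show "w \<in> {w\<in>y. w < v1} \<union> M" using assms(2) unfolding M_def by auto
  next
    fix w assume "w \<in> {w\<in>y. w < v1} \<union> M"
    then show "w \<in> {w\<in>y. w < v2}" using assms(5) between less_trans unfolding M_def by blast
  qed
  moreover have "{w\<in>y. w < v1} \<inter> M = {}" unfolding M_def using less_asym by blast
  ultimately have below_v2: "card {w\<in>y. w < v2} = card {w\<in>y. w < v1} + card M"
    using \<open>finite M\<close> \<open>finite y\<close> by (simp add: card_Un_disjoint)
  define e where "e = (\<Sum>r\<in>y. card {w\<in>B. w < r}) + card {w\<in>B. w < v1} + card {w\<in>y. w < v1}"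
  have "koszul_sign B (insert v1 y) * koszul_diff (insert v1 y) y = ((-1) ^ e :: 'k)"
    using assms(3) \<open>finite y\<close> unfolding koszul_sign_def e_def
    by (simp add: koszul_diff_insert power_add)
  moreover have "koszul_sign B (insert v2 y) * koszul_diff (insert v2 y) y = ((-1) ^ (e + 1 + 2 * card M) :: 'k)"
    using assms(4) \<open>finite y\<close> rank_v2 below_v2 unfolding koszul_sign_def e_def
    by (simp add: koszul_diff_insert power_add algebra_simps)
  ultimately show ?thesis by (simp add: power_add power_mult)
qed

text \<open>An acyclic matching on the Koszul basis in the sense of discrete Morse theory: a cell \<open>S\<close>
  with \<open>pivot S \<in> S\<close> is matched with \<open>S - {pivot S}\<close>, and the weight makes the
  differential, restricted to the upper cells and their partners, triangular. Hence only unmatched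
  (critical) cells can carry homology.\<close>

locale koszul_morse_matching =
  fixes V :: "(nat \<times> nat) set" and inI :: "(nat \<times> nat \<Rightarrow> nat) \<Rightarrow> bool" and b :: "nat \<times> nat \<Rightarrow> nat"
    and matched :: "(nat \<times> nat) set \<Rightarrow> bool" and pivot :: "(nat \<times> nat) set \<Rightarrow> nat \<times> nat"
    and weight :: "(nat \<times> nat) set \<Rightarrow> nat"
  assumes finite_V: "finite V"
  and insert_pivot: "\<And>k S. S \<in> koszul_basis V inI k b \<Longrightarrow> matched S \<Longrightarrow> pivot S \<notin> S \<Longrightarrow>
      insert (pivot S) S \<in> koszul_basis V inI (Suc k) b \<and> matched (insert (pivot S) S) \<and>
      pivot (insert (pivot S) S) = pivot S"
  and remove_pivot: "\<And>k S. S \<in> koszul_basis V inI (Suc k) b \<Longrightarrow> matched S \<Longrightarrow> pivot S \<in> S \<Longrightarrow>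
      S - {pivot S} \<in> koszul_basis V inI k b \<and> matched (S - {pivot S}) \<and> pivot (S - {pivot S}) = pivot S"
  and weight_less: "\<And>k S T v. S \<in> koszul_basis V inI k b \<Longrightarrow> T \<in> koszul_basis V inI k b \<Longrightarrow>
      matched S \<Longrightarrow> pivot S \<in> S \<Longrightarrow> matched T \<Longrightarrow> pivot T \<in> T \<Longrightarrow>
      v \<notin> S - {pivot S} \<Longrightarrow> T = insert v (S - {pivot S}) \<Longrightarrow> T \<noteq> S \<Longrightarrow> weight S < weight T"
begin

definition "upper_cells k = {S \<in> koszul_basis V inI k b. matched S \<and> pivot S \<in> S}"
definition "lower_cells k = {S \<in> koszul_basis V inI k b. matched S \<and> pivot S \<notin> S}"
definition "critical_cells k = {S \<in> koszul_basis V inI k b. \<not> matched S}"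

lemma upper_cells_independent:
  assumes "k \<noteq> 0"
  shows "columns_independent (koszul_diff :: _ \<Rightarrow> _ \<Rightarrow> 'k::field) (upper_cells k) (koszul_basis V inI (k - 1) b)"
  unfolding columns_independent_def
proof (intro allI impI ballI, rule ccontr)
  fix c :: "(nat \<times> nat) set \<Rightarrow> 'k" and T
  assume cycle: "\<forall>y\<in>koszul_basis V inI (k - 1) b. (\<Sum>t\<in>upper_cells k. c t * koszul_diff t y) = 0"
    and "T \<in> upper_cells k" "c T \<noteq> 0"
  define Z where "Z = {t\<in>upper_cells k. c t \<noteq> 0}"
  have "finite Z" unfolding Z_def upper_cells_def using finite_koszul_basis[OF finite_V] by auto
  moreover have "Z \<noteq> {}" using \<open>T \<in> upper_cells k\<close> \<open>c T \<noteq> 0\<close> Z_def by auto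
  ultimately have "Max (weight ` Z) \<in> weight ` Z" by simp
  then obtain S where "S \<in> Z" "weight S = Max (weight ` Z)" by auto
  with \<open>finite Z\<close> have S_max: "\<And>t. t \<in> Z \<Longrightarrow> weight t \<le> weight S" by simp
  have S: "S \<in> upper_cells k" "c S \<noteq> 0" using \<open>S \<in> Z\<close> unfolding Z_def by auto
  define y where "y = S - {pivot S}"
  have "S \<in> koszul_basis V inI (Suc (k - 1)) b" using S assms unfolding upper_cells_def by simp
  then have y: "y \<in> koszul_basis V inI (k - 1) b" using remove_pivot S unfolding upper_cells_def y_def by blast
  have "finite S" using S koszul_basis_finite_elem[OF finite_V] unfolding upper_cells_def by blast
  then have "(koszul_diff S y :: 'k) = (-1) ^ card {w\<in>S. w < pivot S}"
    using S koszul_diff_remove unfolding upper_cells_def y_def by blast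
  then have "(koszul_diff S y :: 'k) \<noteq> 0" by simp
  have others: "c t * koszul_diff t y = 0" if t: "t \<in> upper_cells k - {S}" for t
  proof (rule ccontr)
    assume "c t * koszul_diff t y \<noteq> 0"
    then have "t \<in> Z" and "(koszul_diff t y :: 'k) \<noteq> 0" using t Z_def by auto
    from this(2) obtain v where "v \<in> t" "y = t - {v}" by (rule koszul_diff_nonzero_imp)
    then have "weight S < weight t"
      using t S weight_less[of S k t v] unfolding upper_cells_def y_def by blast
    with S_max[OF \<open>t \<in> Z\<close>] show False by simp
  qed
  have "finite (upper_cells k)"
    unfolding upper_cells_def using finite_koszul_basis[OF finite_V] by simp
  then have "(\<Sum>t\<in>upper_cells k. c t * koszul_diff t y) = c S * koszul_diff S y"
    using S(1) others by (simp add: sum.remove sum.neutral)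
  with cycle y S(2) \<open>koszul_diff S y \<noteq> 0\<close> show False by simp
qed

lemma card_upper_cells_le_rank:
  "card (upper_cells k) \<le> koszul_rank (TYPE('k::field)) V inI k b"
proof (cases "k = 0")
  case True
  then have "upper_cells k = {}"
    unfolding upper_cells_def using card_koszul_basis_elem koszul_basis_finite_elem[OF finite_V]
    by fastforce
  then show ?thesis by simp
next
  case False
  have "upper_cells k \<subseteq> koszul_basis V inI k b" unfolding upper_cells_def by blast
  with False show ?thesis
    unfolding koszul_rank_def
    using card_le_colrank[OF finite_koszul_basis[OF finite_V] _ upper_cells_independent[OF False]]
    by simp
qed

lemma card_lower_cells: "card (lower_cells k) = card (upper_cells (Suc k))"
proof (rule bij_betw_same_card[of "\<lambda>S. insert (pivot S) S"],
       rule bij_betw_byWitness[where f'="\<lambda>S. S - {pivot S}"])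
  show "\<forall>S\<in>lower_cells k. insert (pivot S) S - {pivot (insert (pivot S) S)} = S"
    using insert_pivot unfolding lower_cells_def by auto
  show "\<forall>S\<in>upper_cells (Suc k). insert (pivot (S - {pivot S})) (S - {pivot S}) = S"
    using remove_pivot unfolding upper_cells_def by auto
  show "(\<lambda>S. insert (pivot S) S) ` lower_cells k \<subseteq> upper_cells (Suc k)"
    using insert_pivot unfolding lower_cells_def upper_cells_def by auto
  show "(\<lambda>S. S - {pivot S}) ` upper_cells (Suc k) \<subseteq> lower_cells k"
    using remove_pivot unfolding lower_cells_def upper_cells_def by auto
qed

lemma card_cells:
  "card (koszul_basis V inI k b) = card (upper_cells k) + card (lower_cells k) + card (critical_cells k)"
proof -
  have "koszul_basis V inI k b = (upper_cells k \<union> lower_cells k) \<union> critical_cells k"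
    unfolding upper_cells_def lower_cells_def critical_cells_def by auto
  moreover have "finite (upper_cells k)" "finite (lower_cells k)" "finite (critical_cells k)"
    unfolding upper_cells_def lower_cells_def critical_cells_def
    using finite_koszul_basis[OF finite_V] by auto
  moreover have "(upper_cells k \<union> lower_cells k) \<inter> critical_cells k = {}"
    "upper_cells k \<inter> lower_cells k = {}"
    unfolding upper_cells_def lower_cells_def critical_cells_def by auto
  ultimately show ?thesis by (metis card_Un_disjoint finite_UnI)
qed

theorem multigraded_betti_le_critical:
  "multigraded_betti (TYPE('k::field)) V inI k b \<le> card (critical_cells k)"
  using card_upper_cells_le_rank[of k, where 'k='k] card_upper_cells_le_rank[of "Suc k", where 'k='k]
    card_cells[of k] card_lower_cells[of k]
  unfolding multigraded_betti_def by linarith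

end

lemma multigraded_betti_nonsquarefree_degree:
  assumes "finite V" and supp: "\<forall>v. v \<notin> V \<longrightarrow> b v = 0" and "2 \<le> b v0"
    and squarefree_ideal: "\<And>u u'. (\<And>v. 1 \<le> u v \<longleftrightarrow> 1 \<le> u' v) \<Longrightarrow> inI u = inI u'"
  shows "multigraded_betti (TYPE('k::field)) V inI i b = 0"
proof -
  have "v0 \<in> V" using supp \<open>2 \<le> b v0\<close> by (metis not_numeral_le_zero)
  txt \<open>Since \<open>2 \<le> b v0\<close>, toggling \<open>v0\<close> does not change the support of the shifted monomial.\<close>
  have toggle: "inI (\<lambda>v. if v \<in> S then b v - 1 else b v) = inI (\<lambda>v. if v \<in> S' then b v - 1 else b v)"
    if "S - {v0} = S' - {v0}" for S S'
  proof (rule squarefree_ideal)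
    fix v
    show "1 \<le> (if v \<in> S then b v - 1 else b v) \<longleftrightarrow> 1 \<le> (if v \<in> S' then b v - 1 else b v)"
    proof (cases "v = v0")
      case False
      then have "v \<in> S \<longleftrightarrow> v \<in> S'" using that by blast
      then show ?thesis by simp
    qed (use \<open>2 \<le> b v0\<close> in auto)
  qed
  interpret koszul_morse_matching V inI b "\<lambda>_. True" "\<lambda>_. v0" "\<lambda>_. 0"
  proof
    fix k S
    assume S: "S \<in> koszul_basis V inI k b" "v0 \<notin> S"
    then have "finite S" using koszul_basis_finite_elem[OF \<open>finite V\<close>] by blast
    then show "insert v0 S \<in> koszul_basis V inI (Suc k) b \<and> True \<and> v0 = v0"
      using S \<open>v0 \<in> V\<close> \<open>2 \<le> b v0\<close> toggle[of "insert v0 S" S] unfolding koszul_basis_def by auto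
  next
    fix k S
    assume S: "S \<in> koszul_basis V inI (Suc k) b" "v0 \<in> S"
    then have "finite S" using koszul_basis_finite_elem[OF \<open>finite V\<close>] by blast
    then show "S - {v0} \<in> koszul_basis V inI k b \<and> True \<and> v0 = v0"
      using S toggle[of "S - {v0}" S] unfolding koszul_basis_def by auto
  qed (use assms in auto)
  have "critical_cells i = {}" unfolding critical_cells_def by simp
  then show ?thesis using multigraded_betti_le_critical[of i, where 'k='k] by simp
qed

lemma finite_multidegrees:
  assumes "finite V"
  shows "finite {b :: 'a \<Rightarrow> nat. (\<forall>v. v \<notin> V \<longrightarrow> b v = 0) \<and> int (\<Sum>v\<in>V. b v) = j}"
proof (rule finite_subset[OF _ finite_set_of_finite_funs[OF assms finite_atMost]])
  have "b v \<le> nat j" if "int (\<Sum>v\<in>V. b v) = j" "v \<in> V" for b :: "'a \<Rightarrow> nat" and v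
  proof -
    have "b v \<le> (\<Sum>v\<in>V. b v)" using that(2) assms by (intro member_le_sum) auto
    then show ?thesis using that(1) by linarith
  qed
  then show "{b :: 'a \<Rightarrow> nat. (\<forall>v. v \<notin> V \<longrightarrow> b v = 0) \<and> int (\<Sum>v\<in>V. b v) = j} \<subseteq>
      {b. \<forall>v. (v \<in> V \<longrightarrow> b v \<in> {..nat j}) \<and> (v \<notin> V \<longrightarrow> b v = 0)}" by blast
qed

lemma sum_indicator_subset: "finite V \<Longrightarrow> Bs \<subseteq> V \<Longrightarrow> (\<Sum>v\<in>V. indicator Bs v :: nat) = card Bs"
  by (simp add: sum_indicator_eq_card Int_absorb1)

lemma indicator_support_eq: "(\<And>v. b v \<le> (1::nat)) \<Longrightarrow> indicator {v. 1 \<le> b v} = b"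
proof
  fix v assume "\<And>v. b v \<le> (1::nat)"
  then have "b v = 0 \<or> b v = 1" using le_Suc_eq[of "b v" 0] by simp
  then show "indicator {v. 1 \<le> b v} v = b v" by (auto simp: indicator_def)
qed

lemma betti_squarefree_ideal:
  assumes "finite V" and squarefree_ideal: "\<And>u u'. (\<And>v. 1 \<le> u v \<longleftrightarrow> 1 \<le> u' v) \<Longrightarrow> inI u = inI u'"
  shows "betti (K :: 'k::field itself) V inI i j =
    of_nat (\<Sum>Bs | Bs \<subseteq> V \<and> int (card Bs) = j. multigraded_betti K V inI i (indicator Bs))"
proof -
  define degree_j where "degree_j = {b. (\<forall>v. v \<notin> V \<longrightarrow> b v = 0) \<and> int (\<Sum>v\<in>V. b v) = j}"
  define sets_j where "sets_j = {Bs. Bs \<subseteq> V \<and> int (card Bs) = j}"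
  have indicator_degree: "indicator Bs \<in> degree_j" if "Bs \<in> sets_j" for Bs
    using that sum_indicator_subset[OF assms(1)] unfolding degree_j_def sets_j_def
    by (auto simp: indicator_def simp del: of_nat_sum)
  have vanish: "multigraded_betti K V inI i b = 0" if b: "b \<in> degree_j - indicator ` sets_j" for b
  proof -
    have supp: "\<forall>v. v \<notin> V \<longrightarrow> b v = 0" using b unfolding degree_j_def by blast
    have "\<exists>v. 2 \<le> b v"
    proof (rule ccontr)
      assume "\<nexists>v. 2 \<le> b v"
      have "b v \<le> 1" for v
      proof -
        have "\<not> 2 \<le> b v" using \<open>\<nexists>v. 2 \<le> b v\<close> by blast
        then show ?thesis by linarith
      qed
      then have b_eq: "indicator {v. 1 \<le> b v} = b" by (rule indicator_support_eq)
      have "{v. 1 \<le> b v} \<subseteq> V" using supp by force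
      then have "{v. 1 \<le> b v} \<in> sets_j"
        using b sum_indicator_subset[OF assms(1), of "{v. 1 \<le> b v}"] unfolding b_eq degree_j_def sets_j_def
        by (auto simp del: of_nat_sum)
      then show False using b b_eq by force
    qed
    then obtain v0 where "2 \<le> b v0" by blast
    then show ?thesis
      by (subst multigraded_betti_itself)
        (rule multigraded_betti_nonsquarefree_degree[OF assms(1) supp _ squarefree_ideal])
  qed
  have "(\<Sum>b\<in>degree_j. multigraded_betti K V inI i b) = (\<Sum>b\<in>indicator ` sets_j. multigraded_betti K V inI i b)"
    using finite_multidegrees[OF assms(1)] indicator_degree vanish unfolding degree_j_def
    by (intro sum.mono_neutral_right) auto
  also have "\<dots> = (\<Sum>Bs\<in>sets_j. multigraded_betti K V inI i (indicator Bs))"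
    by (rule sum.reindex_cong[of indicator]) (auto simp: inj_on_def indicator_def fun_eq_iff)
  finally show ?thesis unfolding betti_def degree_j_def sets_j_def by simp
qed

lemma sum_ge_one_eq_Suc_obtain:
  fixes f :: "nat \<Rightarrow> nat"
  assumes "\<And>j. j < d \<Longrightarrow> 1 \<le> f j" and "(\<Sum>j<d. f j) = Suc d"
  obtains j0 where "j0 < d" "f j0 = 2" "\<And>j. j < d \<Longrightarrow> j \<noteq> j0 \<Longrightarrow> f j = 1"
proof -
  have "(\<Sum>j<d. f j - 1) = (\<Sum>j<d. f j) - (\<Sum>j<d. 1)"
    using assms(1) by (intro sum_subtractf_nat) auto
  then have excess: "(\<Sum>j<d. f j - 1) = 1" using assms(2) by simp
  have "\<exists>j<d. f j - 1 \<noteq> 0"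
  proof (rule ccontr)
    assume "\<not> (\<exists>j<d. f j - 1 \<noteq> 0)"
    then have "(\<Sum>j<d. f j - 1) = 0" by simp
    with excess show False by simp
  qed
  then obtain j0 where j0: "j0 < d" "f j0 - 1 \<noteq> 0" by blast
  have "(\<Sum>j<d. f j - 1) = (f j0 - 1) + (\<Sum>j\<in>{..<d} - {j0}. f j - 1)"
    using j0(1) by (simp add: sum.remove)
  then have "f j0 - 1 = 1" "(\<Sum>j\<in>{..<d} - {j0}. f j - 1) = 0" using excess j0(2) by linarith+
  then have rest: "f j - 1 = 0" if "j < d" "j \<noteq> j0" for j using that by simp
  show thesis
  proof (rule that[OF j0(1)])
    show "f j0 = 2" using \<open>f j0 - 1 = 1\<close> by simp
    fix j assume "j < d" "j \<noteq> j0"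
    then show "f j = 1" using rest assms(1)[of j] by fastforce
  qed
qed

section \<open>Squarefree multidegrees of a Ferrers ideal\<close>

lemma ferrers_mem_cong: "(\<And>v. 1 \<le> u v \<longleftrightarrow> 1 \<le> u' v) \<Longrightarrow> ferrers_mem F u = ferrers_mem F u'"
  unfolding ferrers_mem_def by simp

lemma finite_ferrers_vars: "finite (ferrers_vars n)"
  by (rule finite_subset[of _ "(\<Union>j<length n. {j} \<times> {1..n ! j})"]) (auto simp: ferrers_vars_def)

lemma ferrers_edge:
  "is_ferrers n F \<Longrightarrow> p \<in> F \<Longrightarrow> length p = length n \<and> (\<forall>j<length n. 1 \<le> p ! j \<and> p ! j \<le> n ! j)"
  unfolding is_ferrers_def by blast

lemma ferrers_downward_closed:
  "is_ferrers n F \<Longrightarrow> p \<in> F \<Longrightarrow> length q = length n \<Longrightarrow> (\<And>j. j < length n \<Longrightarrow> 1 \<le> q ! j \<and> q ! j \<le> p ! j)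
    \<Longrightarrow> q \<in> F"
  unfolding is_ferrers_def by blast

definition column_max :: "(nat \<times> nat) set \<Rightarrow> nat \<Rightarrow> nat" where
  "column_max Bs j = Max {l. (j, l) \<in> Bs}"

definition column_maxima :: "nat \<Rightarrow> (nat \<times> nat) set \<Rightarrow> nat list" where
  "column_maxima d Bs = map (column_max Bs) [0..<d]"

definition spans_edge :: "nat \<Rightarrow> nat list set \<Rightarrow> (nat \<times> nat) set \<Rightarrow> bool" where
  "spans_edge d F Bs \<longleftrightarrow> (\<forall>j<d. \<exists>l. (j, l) \<in> Bs) \<and> column_maxima d Bs \<in> F"

definition list_graph :: "nat list \<Rightarrow> (nat \<times> nat) set" where
  "list_graph p = (\<lambda>j. (j, p ! j)) ` {..<length p}"

lemma mem_list_graph [simp]: "(j, l) \<in> list_graph p \<longleftrightarrow> j < length p \<and> l = p ! j"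
  unfolding list_graph_def by auto

lemma card_list_graph [simp]: "card (list_graph p) = length p"
  unfolding list_graph_def by (subst card_image) (auto simp: inj_on_def)

lemma finite_column: "finite Bs \<Longrightarrow> finite {l. (j, l) \<in> Bs}"
  by (rule finite_subset[of _ "snd ` Bs"]) force+

lemma column_max_in: "finite Bs \<Longrightarrow> (j, l) \<in> Bs \<Longrightarrow> (j, column_max Bs j) \<in> Bs"
  unfolding column_max_def using Max_in[OF finite_column, of Bs j] by blast

lemma column_max_ge: "finite Bs \<Longrightarrow> (j, l) \<in> Bs \<Longrightarrow> l \<le> column_max Bs j"
  unfolding column_max_def using finite_column by (intro Max_ge) auto

text \<open>\<open>B\<close> stands for the squarefree multidegree \<open>indicator B\<close>. A Koszul cell \<open>S\<close> lives on the
  monomial with support \<open>B - S\<close>, which lies in \<open>I(F)\<close> iff every column keeps a free variable and the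
  lowest free variables form an edge (\<open>admissible S\<close>).\<close>

locale ferrers_squarefree_degree =
  fixes n :: "nat list" and F :: "nat list set" and B :: "(nat \<times> nat) set"
  assumes ferrers: "is_ferrers n F" and B_subset: "B \<subseteq> ferrers_vars n"
begin

abbreviation "d \<equiv> length n"
abbreviation "cells k \<equiv> koszul_basis (ferrers_vars n) (ferrers_mem F) k (indicator B)"

definition "free S j = {l. (j, l) \<in> B - S}"
definition "min_free S j = (LEAST l. l \<in> free S j)"
definition "admissible S \<longleftrightarrow> (\<forall>j<d. free S j \<noteq> {}) \<and> map (min_free S) [0..<d] \<in> F"

lemma finite_B: "finite B"
  using B_subset finite_ferrers_vars by (rule finite_subset)

lemma B_bounds: "(j, l) \<in> B \<Longrightarrow> j < d \<and> 1 \<le> l \<and> l \<le> n ! j"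
  using B_subset unfolding ferrers_vars_def by auto

lemma finite_free: "finite (free S j)"
  unfolding free_def using finite_column[OF finite_B] by (rule finite_subset[rotated]) auto

lemma min_free_in: "free S j \<noteq> {} \<Longrightarrow> min_free S j \<in> free S j"
  unfolding min_free_def by (auto intro: LeastI)

lemma min_free_le: "l \<in> free S j \<Longrightarrow> min_free S j \<le> l"
  unfolding min_free_def by (rule Least_le)

lemma ferrers_mem_shifted_iff:
  assumes "S \<subseteq> B"
  shows "ferrers_mem F (\<lambda>v. if v \<in> S then indicator B v - 1 else indicator B v) \<longleftrightarrow> admissible S"
proof -
  have support: "1 \<le> (if v \<in> S then indicator B v - 1 else indicator B v :: nat) \<longleftrightarrow> v \<in> B - S" for v
    using assms by (auto simp: indicator_def)
  have "ferrers_mem F (\<lambda>v. if v \<in> S then indicator B v - 1 else indicator B v) \<longleftrightarrow>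
        (\<exists>p\<in>F. \<forall>j<d. p ! j \<in> free S j)"
    unfolding ferrers_mem_def support free_def using ferrers_edge[OF ferrers] by auto
  also have "\<dots> \<longleftrightarrow> admissible S"
  proof
    assume "\<exists>p\<in>F. \<forall>j<d. p ! j \<in> free S j"
    then obtain p where p: "p \<in> F" "\<And>j. j < d \<Longrightarrow> p ! j \<in> free S j" by blast
    then have nonempty: "\<forall>j<d. free S j \<noteq> {}" by auto
    have "map (min_free S) [0..<d] \<in> F"
    proof (rule ferrers_downward_closed[OF ferrers p(1)])
      fix j assume "j < d"
      then have "min_free S j \<in> free S j" using nonempty min_free_in by blast
      then show "1 \<le> map (min_free S) [0..<d] ! j \<and> map (min_free S) [0..<d] ! j \<le> p ! j"
        using \<open>j < d\<close> p(2) B_bounds min_free_le unfolding free_def by auto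
    qed simp
    with nonempty show "admissible S" unfolding admissible_def by simp
  next
    assume "admissible S"
    then show "\<exists>p\<in>F. \<forall>j<d. p ! j \<in> free S j"
      unfolding admissible_def using min_free_in by (intro bexI[of _ "map (min_free S) [0..<d]"]) auto
  qed
  finally show ?thesis .
qed

lemma cells_iff: "S \<in> cells k \<longleftrightarrow> S \<subseteq> B \<and> card S = k \<and> admissible S"
proof -
  have "S \<subseteq> ferrers_vars n \<and> (\<forall>v\<in>S. 1 \<le> (indicator B v :: nat)) \<longleftrightarrow> S \<subseteq> B"
    using B_subset by (auto simp: indicator_def)
  then show ?thesis unfolding koszul_basis_def using ferrers_mem_shifted_iff by auto
qed

text \<open>Toggling a variable above the lowest free variable of its column changes no lowest free
  variable, and the sum of the lowest free variables strictly increases along the zig-zag paths of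
  the matching.\<close>

definition "above_min_free S = {x \<in> B. min_free S (fst x) < snd x}"
definition "pivot S = (SOME x. x \<in> above_min_free S)"
definition "weight S = (\<Sum>j<d. min_free S j)"

lemma min_free_eq_if_differ_above:
  assumes "free S j \<noteq> {}" "min_free S j < l" "S' - {(j, l)} = S - {(j, l)}"
  shows "min_free S' = min_free S"
proof
  fix j'
  have same: "x \<in> S' \<longleftrightarrow> x \<in> S" if "x \<noteq> (j, l)" for x using assms(3) that by blast
  show "min_free S' j' = min_free S j'"
  proof (cases "j' = j")
    case True
    have "min_free S j \<in> free S j" by (rule min_free_in[OF assms(1)])
    then have "min_free S j \<in> free S' j" using same assms(2) unfolding free_def by auto
    moreover have "min_free S j \<le> m" if "m \<in> free S' j" for m
      using that same assms(2) min_free_le[of m S j] unfolding free_def by (cases "m = l") auto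
    ultimately have "(LEAST m. m \<in> free S' j) = min_free S j" by (rule Least_equality)
    then show ?thesis using True unfolding min_free_def[of S'] by simp
  next
    case False
    then have "free S' j' = free S j'" using same unfolding free_def by auto
    then show ?thesis unfolding min_free_def by simp
  qed
qed

lemma admissible_if_differ_above:
  assumes "admissible S" "(j, l) \<in> above_min_free S" "S' - {(j, l)} = S - {(j, l)}"
  shows "admissible S' \<and> min_free S' = min_free S"
proof -
  have "(j, l) \<in> B" "min_free S j < l" using assms(2) unfolding above_min_free_def by auto
  moreover have "free S j \<noteq> {}" using assms(1) B_bounds[OF \<open>(j, l) \<in> B\<close>] unfolding admissible_def by auto
  ultimately have same: "min_free S' = min_free S" using assms(3) by (intro min_free_eq_if_differ_above)
  have "free S' j' \<noteq> {}" if "j' < d" for j'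
  proof -
    have "min_free S j' \<in> free S j'" using min_free_in assms(1) that unfolding admissible_def by blast
    moreover have "(j', min_free S j') \<noteq> (j, l)" using \<open>min_free S j < l\<close> by auto
    ultimately have "min_free S j' \<in> free S' j'" using assms(3) unfolding free_def by blast
    then show ?thesis by blast
  qed
  then show ?thesis using assms(1) same unfolding admissible_def by simp
qed

lemma pivot_in_above_min_free: "above_min_free S \<noteq> {} \<Longrightarrow> pivot S \<in> above_min_free S"
  unfolding pivot_def by (simp add: some_in_eq)

lemma toggle_pivot:
  assumes "S \<in> cells k" "above_min_free S \<noteq> {}" "S' - {pivot S} = S - {pivot S}" "S' \<subseteq> B"
  shows "S' \<in> cells (card S') \<and> above_min_free S' \<noteq> {} \<and> pivot S' = pivot S"
proof -
  obtain j l where jl: "pivot S = (j, l)" by fastforce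
  have "admissible S" using assms(1) unfolding cells_iff by simp
  moreover have "(j, l) \<in> above_min_free S" using pivot_in_above_min_free[OF assms(2)] jl by simp
  moreover have "S' - {(j, l)} = S - {(j, l)}" using assms(3) jl by simp
  ultimately have "admissible S' \<and> min_free S' = min_free S"
    by (rule admissible_if_differ_above)
  then show ?thesis using assms(2,4) unfolding cells_iff pivot_def above_min_free_def by simp
qed

lemma weight_less:
  assumes S: "S \<in> cells k" "above_min_free S \<noteq> {}" "pivot S \<in> S"
    and T: "T \<in> cells k" "above_min_free T \<noteq> {}" "pivot T \<in> T"
    and "v \<notin> S - {pivot S}" and T_eq: "T = insert v (S - {pivot S})" and "T \<noteq> S"
  shows "weight S < weight T"
proof -
  define y where "y = S - {pivot S}"
  obtain j0 l0 where pivot_S: "pivot S = (j0, l0)" by fastforce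
  have "admissible S" "admissible T" "T \<subseteq> B" using S T unfolding cells_iff by auto
  have "(j0, l0) \<in> above_min_free S" using pivot_in_above_min_free[OF S(2)] pivot_S by simp
  moreover have "y - {(j0, l0)} = S - {(j0, l0)}" unfolding y_def pivot_S by blast
  ultimately have min_free_y: "min_free y = min_free S"
    using admissible_if_differ_above[OF \<open>admissible S\<close>] by blast
  obtain j l where v: "v = (j, l)" by fastforce
  have "v \<noteq> pivot S" "v \<notin> y" using T_eq \<open>T \<noteq> S\<close> S(3) \<open>v \<notin> S - {pivot S}\<close> unfolding y_def by auto
  then have l_free: "l \<in> free y j" using T_eq \<open>T \<subseteq> B\<close> v unfolding y_def free_def by auto
  have T_y: "T = insert (j, l) y" using T_eq v y_def by simp
  show ?thesis
  proof (cases "l = min_free y j")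
    case False
    then have "min_free y j < l" using min_free_le[OF l_free] by simp
    then have "min_free T = min_free y"
      using l_free T_y by (intro min_free_eq_if_differ_above) auto
    then have "pivot T = pivot S" using min_free_y unfolding pivot_def above_min_free_def by simp
    then show ?thesis using T(3) T_y \<open>v \<noteq> pivot S\<close> v unfolding y_def by auto
  next
    case True
    have j: "j < d" using B_bounds \<open>T \<subseteq> B\<close> T_y by auto
    then have "free T j \<noteq> {}" using \<open>admissible T\<close> unfolding admissible_def by simp
    then have "min_free T j \<in> free y j - {l}" using min_free_in[of T j] T_y unfolding free_def by auto
    then have "min_free y j < min_free T j" using True min_free_le[of _ y j] by fastforce
    moreover have "min_free T j' = min_free y j'" if "j' \<noteq> j" for j'
      unfolding min_free_def free_def T_y using that by simp
    ultimately have "(\<Sum>j<d. min_free y j) < (\<Sum>j<d. min_free T j)"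
      using j by (intro sum_strict_mono_ex1) (auto, metis less_or_eq_imp_le)
    then show ?thesis unfolding weight_def min_free_y .
  qed
qed

lemma multigraded_betti_le_critical_ferrers:
  "multigraded_betti (TYPE('k::field)) (ferrers_vars n) (ferrers_mem F) i (indicator B) \<le>
     card {S \<in> cells i. above_min_free S = {}}"
proof -
  interpret koszul_morse_matching "ferrers_vars n" "ferrers_mem F" "indicator B"
    "\<lambda>S. above_min_free S \<noteq> {}" pivot weight
  proof
    show "finite (ferrers_vars n)" by (rule finite_ferrers_vars)
  next
    fix k S
    assume S: "S \<in> cells k" "above_min_free S \<noteq> {}" "pivot S \<notin> S"
    moreover have "pivot S \<in> B" using pivot_in_above_min_free[OF S(2)] unfolding above_min_free_def by simp
    moreover have "card (insert (pivot S) S) = Suc k"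
      using S finite_subset[OF _ finite_B] unfolding cells_iff by auto
    ultimately show "insert (pivot S) S \<in> cells (Suc k) \<and> above_min_free (insert (pivot S) S) \<noteq> {} \<and>
        pivot (insert (pivot S) S) = pivot S"
      using toggle_pivot[of S k "insert (pivot S) S"] unfolding cells_iff by auto
  next
    fix k S
    assume S: "S \<in> cells (Suc k)" "above_min_free S \<noteq> {}" "pivot S \<in> S"
    moreover have "card (S - {pivot S}) = k"
      using S finite_subset[OF _ finite_B] unfolding cells_iff by auto
    ultimately show "S - {pivot S} \<in> cells k \<and> above_min_free (S - {pivot S}) \<noteq> {} \<and>
        pivot (S - {pivot S}) = pivot S"
      using toggle_pivot[of S "Suc k" "S - {pivot S}"] unfolding cells_iff by auto
  qed (rule weight_less)
  show ?thesis using multigraded_betti_le_critical[of i, where 'k='k] unfolding critical_cells_def by simp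
qed

lemma top_graph_subset: "spans_edge d F B \<Longrightarrow> list_graph (column_maxima d B) \<subseteq> B"
  unfolding spans_edge_def using column_max_in[OF finite_B] by (auto simp: column_maxima_def)

lemma card_diff_top_graph:
  assumes "spans_edge d F B"
  shows "card (B - list_graph (column_maxima d B)) + d = card B"
proof -
  let ?G = "list_graph (column_maxima d B)"
  have "?G \<subseteq> B" using assms by (rule top_graph_subset)
  then have "finite ?G" using finite_B by (rule finite_subset)
  have "card (B - ?G) = card B - card ?G" using \<open>finite ?G\<close> \<open>?G \<subseteq> B\<close> by (rule card_Diff_subset)
  moreover have "card ?G \<le> card B" using finite_B \<open>?G \<subseteq> B\<close> by (rule card_mono)
  moreover have "card ?G = d" by (simp add: column_maxima_def)
  ultimately show ?thesis by linarith
qed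

lemma critical_cell:
  assumes "S \<in> cells i" "above_min_free S = {}"
  shows "spans_edge d F B \<and> S = B - list_graph (column_maxima d B) \<and> card B = i + d"
proof -
  have "S \<subseteq> B" "card S = i" "admissible S" using assms(1) unfolding cells_iff by auto
  have top: "column_max B j = min_free S j \<and> (j, min_free S j) \<in> B - S" if "j < d" for j
  proof -
    have "min_free S j \<in> free S j" using \<open>admissible S\<close> that min_free_in unfolding admissible_def by blast
    then have "(j, min_free S j) \<in> B - S" unfolding free_def by simp
    moreover have "l \<le> min_free S j" if "(j, l) \<in> B" for l
    proof -
      have "(j, l) \<notin> above_min_free S" using assms(2) by simp
      then show ?thesis using that unfolding above_min_free_def by simp
    qed
    ultimately show ?thesis
      unfolding column_max_def using finite_column[OF finite_B] by (intro conjI Max_eqI) auto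
  qed
  have "column_maxima d B = map (min_free S) [0..<d]"
    unfolding column_maxima_def using top by simp
  moreover have "\<forall>j<d. \<exists>l. (j, l) \<in> B" using top by blast
  ultimately have spans: "spans_edge d F B"
    using \<open>admissible S\<close> unfolding spans_edge_def admissible_def by simp
  let ?G = "list_graph (column_maxima d B)"
  have S_eq: "S = B - ?G"
  proof (intro equalityI subsetI)
    fix x assume "x \<in> S"
    then show "x \<in> B - ?G" using \<open>S \<subseteq> B\<close> top by (cases x) (auto simp: column_maxima_def)
  next
    fix x assume x: "x \<in> B - ?G"
    obtain j l where jl: "x = (j, l)" by fastforce
    then have "j < d" "l \<le> column_max B j" "l \<noteq> column_max B j"
      using x B_bounds column_max_ge[OF finite_B] by (auto simp: column_maxima_def)
    then have "l < min_free S j" using top by simp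
    then have "l \<notin> free S j" using min_free_le by fastforce
    then show "x \<in> S" using x jl unfolding free_def by simp
  qed
  then show ?thesis using spans card_diff_top_graph[OF spans] \<open>card S = i\<close> by simp
qed

lemma multigraded_betti_le_top:
  "multigraded_betti (TYPE('k::field)) (ferrers_vars n) (ferrers_mem F) i (indicator B) \<le>
     (if spans_edge d F B \<and> card B = i + d then 1 else 0)"
proof -
  have "card {S \<in> cells i. above_min_free S = {}} \<le> (if spans_edge d F B \<and> card B = i + d then 1 else 0)"
  proof (cases "spans_edge d F B \<and> card B = i + d")
    case True
    have "{S \<in> cells i. above_min_free S = {}} \<subseteq> {B - list_graph (column_maxima d B)}"
      using critical_cell by auto
    then have "card {S \<in> cells i. above_min_free S = {}} \<le> 1"
      using card_mono[of "{B - list_graph (column_maxima d B)}"] by simp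
    then show ?thesis using True by simp
  next
    case False
    then have "{S \<in> cells i. above_min_free S = {}} = {}" using critical_cell by blast
    then have "card {S \<in> cells i. above_min_free S = {}} = 0" by (simp only: card.empty)
    then show ?thesis using False by simp
  qed
  then show ?thesis using multigraded_betti_le_critical_ferrers[of i, where 'k='k] by linarith
qed

lemma card_cell_le: "S \<in> cells k \<Longrightarrow> k + d \<le> card B"
proof -
  assume "S \<in> cells k"
  then have "S \<subseteq> B" "card S = k" "admissible S" unfolding cells_iff by auto
  define Q where "Q = (\<lambda>j. (j, min_free S j)) ` {..<d}"
  have "Q \<subseteq> B - S"
    using \<open>admissible S\<close> min_free_in unfolding Q_def admissible_def free_def by fastforce
  moreover have "card Q = d" unfolding Q_def by (subst card_image) (auto simp: inj_on_def)
  moreover have "finite S" "finite Q" using \<open>S \<subseteq> B\<close> finite_B finite_subset unfolding Q_def by auto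
  moreover have "S \<union> Q \<subseteq> B" "S \<inter> Q = {}" using \<open>S \<subseteq> B\<close> \<open>Q \<subseteq> B - S\<close> by blast+
  ultimately have "card S + d \<le> card B"
    using card_mono[OF finite_B, of "S \<union> Q"] card_Un_disjoint[of S Q] by auto
  then show ?thesis using \<open>card S = k\<close> by simp
qed

lemma admissible_if_spans_edge:
  assumes "spans_edge d F B" "S \<subseteq> B" "\<And>j. j < d \<Longrightarrow> free S j \<noteq> {}"
  shows "admissible S"
proof -
  have "map (min_free S) [0..<d] \<in> F"
  proof (rule ferrers_downward_closed[OF ferrers])
    show "column_maxima d B \<in> F" using assms(1) unfolding spans_edge_def by simp
    fix j assume "j < d"
    then have "(j, min_free S j) \<in> B" using min_free_in[OF assms(3)] unfolding free_def by blast
    then show "1 \<le> map (min_free S) [0..<d] ! j \<and> map (min_free S) [0..<d] ! j \<le> column_maxima d B ! j"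
      using \<open>j < d\<close> B_bounds column_max_ge[OF finite_B] by (simp add: column_maxima_def)
  qed simp
  then show ?thesis using assms(3) unfolding admissible_def by blast
qed

lemma top_degree_free_columns:
  assumes "y \<in> cells k" "Suc k + d = card B"
  obtains j0 x1 x2 where "j0 < d" "x1 < x2" "free y j0 = {x1, x2}"
    "\<And>j. j < d \<Longrightarrow> j \<noteq> j0 \<Longrightarrow> card (free y j) = 1"
proof -
  have "y \<subseteq> B" "card y = k" "admissible y" using assms(1) unfolding cells_iff by auto
  have "B - y = (\<Union>j<d. Pair j ` free y j)"
    using B_bounds unfolding free_def by fastforce
  moreover have "card (\<Union>j<d. Pair j ` free y j) = (\<Sum>j<d. card (free y j))"
    by (subst card_UN_disjoint) (auto simp: finite_free card_image inj_on_def)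
  moreover have "card (B - y) = Suc d"
    using assms(2) \<open>y \<subseteq> B\<close> \<open>card y = k\<close> finite_B by (simp add: card_Diff_subset finite_subset)
  ultimately have sum: "(\<Sum>j<d. card (free y j)) = Suc d" by simp
  have pos: "1 \<le> card (free y j)" if "j < d" for j
    using \<open>admissible y\<close> that finite_free unfolding admissible_def by (simp add: Suc_le_eq card_gt_0_iff)
  obtain j0 where j0: "j0 < d" "card (free y j0) = 2"
    and others: "\<And>j. j < d \<Longrightarrow> j \<noteq> j0 \<Longrightarrow> card (free y j) = 1"
    using sum_ge_one_eq_Suc_obtain[where f = "\<lambda>j. card (free y j)", OF pos sum] by blast
  then obtain u v where uv: "free y j0 = {u, v}" "u \<noteq> v" by (auto simp: card_2_iff)
  show thesis
  proof (cases "u < v")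
    case True
    then show thesis using that[OF j0(1) True uv(1) others] by blast
  next
    case False
    then have "v < u" using uv(2) by simp
    then show thesis using that[OF j0(1) _ _ others] uv(1) by (simp add: insert_commute)
  qed
qed

lemma top_degree_coface:
  assumes "spans_edge d F B" "y \<in> cells k" "free y j0 = {x1, x2}" "x1 \<noteq> x2" "x \<in> {x1, x2}"
  shows "insert (j0, x) y \<in> cells (Suc k)"
proof -
  have "y \<subseteq> B" "card y = k" "admissible y" using assms(2) unfolding cells_iff by auto
  have new: "(j0, x) \<in> B - y" using assms(3,5) unfolding free_def by auto
  have "free (insert (j0, x) y) j \<noteq> {}" if "j < d" for j
    using that \<open>admissible y\<close> assms(3-5) unfolding admissible_def free_def by (cases "j = j0") auto
  then have "admissible (insert (j0, x) y)" using assms(1) \<open>y \<subseteq> B\<close> new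
    by (intro admissible_if_spans_edge) auto
  moreover have "finite y" using \<open>y \<subseteq> B\<close> finite_B finite_subset by blast
  ultimately show ?thesis using new \<open>y \<subseteq> B\<close> \<open>card y = k\<close> unfolding cells_iff by auto
qed

lemma top_degree_coface_cases:
  assumes "t \<in> cells (Suc k)" "v \<in> t" "y = t - {v}" "j0 < d" "free y j0 = {x1, x2}"
    and others: "\<And>j. j < d \<Longrightarrow> j \<noteq> j0 \<Longrightarrow> card (free y j) = 1"
  shows "v \<in> {(j0, x1), (j0, x2)}"
proof -
  obtain j l where jl: "v = (j, l)" by fastforce
  have "t \<subseteq> B" "admissible t" using assms(1) unfolding cells_iff by auto
  then have "j < d" "l \<in> free y j" using B_bounds assms(2,3) jl unfolding free_def by auto
  moreover have "free y j - {l} \<noteq> {}"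
    using \<open>admissible t\<close> \<open>j < d\<close> assms(2,3) jl unfolding admissible_def free_def by auto
  ultimately have "j = j0" using others[of j] by (auto simp: card_1_singleton_iff)
  then show ?thesis using \<open>l \<in> free y j\<close> assms(5) jl by auto
qed

lemma top_degree_cycle:
  assumes spans: "spans_edge d F B" and y: "y \<in> cells k" and top: "Suc k + d = card B"
  shows "(\<Sum>t\<in>cells (Suc k). koszul_sign B t * koszul_diff t y) = (0::'k::field)"
proof -
  have "y \<subseteq> B" using y unfolding cells_iff by auto
  obtain j0 x1 x2 where j0: "j0 < d" "x1 < x2" "free y j0 = {x1, x2}"
    and others: "\<And>j. j < d \<Longrightarrow> j \<noteq> j0 \<Longrightarrow> card (free y j) = 1"
    using top_degree_free_columns[OF y top] by blast
  define v1 where "v1 = (j0, x1)"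
  define v2 where "v2 = (j0, x2)"
  have v: "v1 \<in> B - y" "v2 \<in> B - y" "v1 < v2"
    using j0 unfolding v1_def v2_def free_def less_prod_def by auto
  have "(koszul_diff t y :: 'k) = 0" if t: "t \<in> cells (Suc k) - {insert v1 y, insert v2 y}" for t
  proof (rule ccontr)
    assume "(koszul_diff t y :: 'k) \<noteq> 0"
    then obtain v where "v \<in> t" "y = t - {v}" by (rule koszul_diff_nonzero_imp)
    then have "v \<in> {v1, v2}"
      using t top_degree_coface_cases[of t k v y j0 x1 x2] j0 others unfolding v1_def v2_def by blast
    then show False using t \<open>v \<in> t\<close> \<open>y = t - {v}\<close> by auto
  qed
  moreover have "insert v1 y \<in> cells (Suc k)" "insert v2 y \<in> cells (Suc k)"
    using top_degree_coface[OF spans y j0(3)] j0(2) unfolding v1_def v2_def by auto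
  ultimately have "(\<Sum>t\<in>cells (Suc k). koszul_sign B t * koszul_diff t y) =
      (\<Sum>t\<in>{insert v1 y, insert v2 y}. koszul_sign B t * (koszul_diff t y :: 'k))"
    using finite_koszul_basis[OF finite_ferrers_vars] by (intro sum.mono_neutral_right) auto
  also have "\<dots> = koszul_sign B (insert v1 y) * koszul_diff (insert v1 y) y +
      koszul_sign B (insert v2 y) * koszul_diff (insert v2 y) y"
    using v by (subst sum.insert) auto
  also have "\<dots> = 0"
  proof (rule koszul_sign_cancel[OF finite_B \<open>y \<subseteq> B\<close> v])
    fix w assume "w \<in> B" "v1 < w" "w < v2"
    then have "fst w = j0" "x1 < snd w" "snd w < x2" unfolding v1_def v2_def less_prod_def by auto
    then show "w \<in> y" using \<open>w \<in> B\<close> j0(3) unfolding free_def by (cases w) auto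
  qed
  finally show ?thesis .
qed

lemma multigraded_betti_top_ge_one:
  assumes spans: "spans_edge d F B" and top: "card B = i + d"
  shows "1 \<le> multigraded_betti (TYPE('k::field)) (ferrers_vars n) (ferrers_mem F) i (indicator B)"
proof -
  define G where "G = list_graph (column_maxima d B)"
  have "card (B - G) = i" using card_diff_top_graph[OF spans] top unfolding G_def by simp
  have "free (B - G) j \<noteq> {}" if j: "j < d" for j
  proof -
    obtain l where "(j, l) \<in> B" using spans j unfolding spans_edge_def by blast
    then have "column_max B j \<in> free (B - G) j"
      using column_max_in[OF finite_B] j unfolding free_def G_def by (simp add: column_maxima_def)
    then show ?thesis by blast
  qed
  then have "admissible (B - G)" using spans by (intro admissible_if_spans_edge) auto
  then have critical: "B - G \<in> cells i" using \<open>card (B - G) = i\<close> unfolding cells_iff by simp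
  have "cells (Suc i) = {}" using card_cell_le top by fastforce
  then have rank_Suc: "koszul_rank (TYPE('k)) (ferrers_vars n) (ferrers_mem F) (Suc i) (indicator B) = 0"
    unfolding koszul_rank_def by simp
  have finite_cells: "finite (cells i)" by (rule finite_koszul_basis[OF finite_ferrers_vars])
  have "koszul_rank (TYPE('k)) (ferrers_vars n) (ferrers_mem F) i (indicator B) < card (cells i)"
  proof (cases "i = 0")
    case True
    then show ?thesis using critical finite_cells card_gt_0_iff unfolding koszul_rank_def by auto
  next
    case False
    have "\<not> columns_independent (koszul_diff :: _ \<Rightarrow> _ \<Rightarrow> 'k) (cells i) (cells (i - 1))"
    proof
      assume independent: "columns_independent (koszul_diff :: _ \<Rightarrow> _ \<Rightarrow> 'k) (cells i) (cells (i - 1))"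
      have "\<forall>y\<in>cells (i - 1). (\<Sum>t\<in>cells i. koszul_sign B t * (koszul_diff t y :: 'k)) = 0"
        using top_degree_cycle[OF spans, of _ "i - 1", where 'k='k] top False by simp
      then have "(koszul_sign B (B - G) :: 'k) = 0"
        using independent critical unfolding columns_independent_def by blast
      then show False by (simp add: koszul_sign_def)
    qed
    with False show ?thesis unfolding koszul_rank_def using colrank_less_card[OF finite_cells] by simp
  qed
  then show ?thesis unfolding multigraded_betti_def rank_Suc by simp
qed

theorem multigraded_betti_squarefree_degree:
  "multigraded_betti (TYPE('k::field)) (ferrers_vars n) (ferrers_mem F) i (indicator B) =
     (if spans_edge d F B \<and> card B = i + d then 1 else 0)"
  using multigraded_betti_le_top[of i, where 'k='k] multigraded_betti_top_ge_one[of i, where 'k='k]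
  by (auto split: if_splits)

end

section \<open>Counting the squarefree multidegrees\<close>

definition below_list_graph :: "nat list \<Rightarrow> (nat \<times> nat) set" where
  "below_list_graph p = {(j, l). j < length p \<and> 1 \<le> l \<and> l < p ! j}"

lemma below_list_graph_eq_UN: "below_list_graph p = (\<Union>j<length p. Pair j ` {1..<p ! j})"
  unfolding below_list_graph_def by auto

lemma finite_below_list_graph: "finite (below_list_graph p)"
  unfolding below_list_graph_eq_UN by simp

lemma card_below_list_graph:
  assumes "\<And>j. j < length p \<Longrightarrow> 1 \<le> p ! j"
  shows "card (below_list_graph p) = sum_list p - length p"
proof -
  have "card (below_list_graph p) = (\<Sum>j<length p. card (Pair j ` {1..<p ! j}))"
    unfolding below_list_graph_eq_UN by (rule card_UN_disjoint) auto
  also have "\<dots> = (\<Sum>j<length p. p ! j - 1)" by (simp add: card_image inj_on_def)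
  also have "\<dots> = (\<Sum>j<length p. p ! j) - (\<Sum>j<length p. 1)"
    using assms by (intro sum_subtractf_nat) auto
  finally show ?thesis by (simp add: sum_list_sum_nth atLeast0LessThan)
qed

lemma column_maxima_union_below:
  assumes "Y \<subseteq> below_list_graph p"
  shows "column_maxima (length p) (Y \<union> list_graph p) = p"
proof (rule nth_equalityI)
  fix j assume "j < length (column_maxima (length p) (Y \<union> list_graph p))"
  then have "j < length p" by (simp add: column_maxima_def)
  have "finite (Y \<union> list_graph p)"
    using assms finite_below_list_graph finite_subset by (auto simp: list_graph_def)
  then have "column_max (Y \<union> list_graph p) j = p ! j"
    using assms \<open>j < length p\<close> unfolding column_max_def below_list_graph_def
    by (intro Max_eqI) (auto intro: finite_column)
  then show "column_maxima (length p) (Y \<union> list_graph p) ! j = p ! j"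
    using \<open>j < length p\<close> by (simp add: column_maxima_def)
qed (simp add: column_maxima_def)

lemma list_graph_below_disjoint: "list_graph p \<inter> below_list_graph p = {}"
  unfolding below_list_graph_def by auto

lemma column_maxima_fiber_split:
  assumes "finite Bs" "\<And>j l. (j, l) \<in> Bs \<Longrightarrow> j < length p \<and> 1 \<le> l"
    "\<forall>j<length p. \<exists>l. (j, l) \<in> Bs" "column_maxima (length p) Bs = p"
  shows "list_graph p \<subseteq> Bs \<and> Bs - list_graph p \<subseteq> below_list_graph p"
proof -
  have max: "column_max Bs j = p ! j" if "j < length p" for j
    using assms(4) that by (auto simp: column_maxima_def dest: arg_cong[where f = "\<lambda>xs. xs ! j"])
  have "list_graph p \<subseteq> Bs"
    using assms(3) max column_max_in[OF assms(1)] unfolding list_graph_def by fastforce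
  moreover have "Bs - list_graph p \<subseteq> below_list_graph p"
  proof
    fix x assume x: "x \<in> Bs - list_graph p"
    obtain j l where jl: "x = (j, l)" by fastforce
    then have "j < length p" "1 \<le> l" using x assms(2) by auto
    moreover have "l \<le> p ! j" using max[OF \<open>j < length p\<close>] column_max_ge[OF assms(1)] x jl by fastforce
    moreover have "l \<noteq> p ! j" using x jl \<open>j < length p\<close> by auto
    ultimately show "x \<in> below_list_graph p" using jl unfolding below_list_graph_def by auto
  qed
  ultimately show ?thesis ..
qed

text \<open>The sets of \<open>i + d\<close> variables with column maxima \<open>p\<close> are the graph of \<open>p\<close>
  together with any \<open>i\<close> of the \<open>sum_list p - d\<close> variables strictly below it.\<close>

lemma card_column_maxima_fiber:
  assumes "length p = length n" and p_bounds: "\<And>j. j < length n \<Longrightarrow> 1 \<le> p ! j \<and> p ! j \<le> n ! j"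
  shows "card {Bs. Bs \<subseteq> ferrers_vars n \<and> (\<forall>j<length n. \<exists>l. (j, l) \<in> Bs) \<and>
      column_maxima (length n) Bs = p \<and> card Bs = i + length n} = (sum_list p - length n) choose i"
    (is "card ?fiber = _")
proof -
  have graph_V: "list_graph p \<subseteq> ferrers_vars n" and below_V: "below_list_graph p \<subseteq> ferrers_vars n"
    using assms unfolding list_graph_def below_list_graph_def ferrers_vars_def by fastforce+
  have fiber: "finite Bs \<and> list_graph p \<subseteq> Bs \<and> Bs - list_graph p \<subseteq> below_list_graph p"
    if "Bs \<in> ?fiber" for Bs
  proof -
    have "finite Bs" using that finite_ferrers_vars finite_subset by blast
    moreover have "j < length p \<and> 1 \<le> l" if "(j, l) \<in> Bs" for j l
      using \<open>Bs \<in> ?fiber\<close> that \<open>length p = length n\<close> unfolding ferrers_vars_def by auto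
    ultimately show ?thesis using that \<open>length p = length n\<close> column_maxima_fiber_split[of Bs p] by auto
  qed
  have "card ?fiber = card {Y. Y \<subseteq> below_list_graph p \<and> card Y = i}"
  proof (rule bij_betw_same_card[of "\<lambda>Bs. Bs - list_graph p"],
         rule bij_betw_byWitness[where f'="\<lambda>Y. Y \<union> list_graph p"])
    show "\<forall>Bs\<in>?fiber. Bs - list_graph p \<union> list_graph p = Bs" using fiber by blast
    show "\<forall>Y\<in>{Y. Y \<subseteq> below_list_graph p \<and> card Y = i}. Y \<union> list_graph p - list_graph p = Y"
      using list_graph_below_disjoint by blast
    show "(\<lambda>Bs. Bs - list_graph p) ` ?fiber \<subseteq> {Y. Y \<subseteq> below_list_graph p \<and> card Y = i}"
    proof (intro image_subsetI CollectI conjI)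
      fix Bs assume "Bs \<in> ?fiber"
      then show "Bs - list_graph p \<subseteq> below_list_graph p" using fiber by blast
      have "card (Bs - list_graph p) = card Bs - card (list_graph p)"
        using fiber[OF \<open>Bs \<in> ?fiber\<close>] by (meson card_Diff_subset finite_subset)
      then show "card (Bs - list_graph p) = i" using \<open>Bs \<in> ?fiber\<close> \<open>length p = length n\<close> by simp
    qed
    show "(\<lambda>Y. Y \<union> list_graph p) ` {Y. Y \<subseteq> below_list_graph p \<and> card Y = i} \<subseteq> ?fiber"
    proof (intro image_subsetI CollectI conjI allI impI)
      fix Y assume "Y \<in> {Y. Y \<subseteq> below_list_graph p \<and> card Y = i}"
      then have Y: "Y \<subseteq> below_list_graph p" "card Y = i" by auto
      show "Y \<union> list_graph p \<subseteq> ferrers_vars n" using Y graph_V below_V by blast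
      show "column_maxima (length n) (Y \<union> list_graph p) = p"
        using column_maxima_union_below[OF Y(1)] \<open>length p = length n\<close> by simp
      show "\<exists>l. (j, l) \<in> Y \<union> list_graph p" if "j < length n" for j
        using that \<open>length p = length n\<close> by auto
      have "finite Y" using Y(1) finite_below_list_graph finite_subset by blast
      moreover have "Y \<inter> list_graph p = {}" using Y(1) list_graph_below_disjoint by blast
      ultimately show "card (Y \<union> list_graph p) = i + length n"
        using Y(2) \<open>length p = length n\<close> card_list_graph[of p]
        by (simp add: card_Un_disjoint list_graph_def del: card_list_graph)
    qed
  qed
  also have "\<dots> = card (below_list_graph p) choose i"
    by (rule n_subsets[OF finite_below_list_graph])
  finally show ?thesis using card_below_list_graph[of p] assms by simp
qed

lemma finite_ferrers:
  assumes "is_ferrers n F"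
  shows "finite F"
proof (rule finite_subset[OF _ finite_lists_length_eq[of "{..sum_list n}" "length n"]])
  have "x \<le> sum_list n" if "p \<in> F" "x \<in> set p" for p x
  proof -
    obtain j where "j < length p" "x = p ! j" using \<open>x \<in> set p\<close> by (auto simp: in_set_conv_nth)
    moreover have "length p = length n" using ferrers_edge[OF assms \<open>p \<in> F\<close>] by simp
    ultimately have "j < length n" "x = p ! j" by simp_all
    then have "x \<le> n ! j" using ferrers_edge[OF assms \<open>p \<in> F\<close>] by simp
    also have "n ! j \<le> sum_list n" using \<open>j < length n\<close> by (intro member_le_sum_list) auto
    finally show ?thesis .
  qed
  then show "F \<subseteq> {xs. set xs \<subseteq> {..sum_list n} \<and> length xs = length n}"
    using ferrers_edge[OF assms] by auto
qed simp

lemma card_spanning_sets: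
  assumes "is_ferrers n F"
  shows "card {Bs. Bs \<subseteq> ferrers_vars n \<and> spans_edge (length n) F Bs \<and> card Bs = i + length n} =
    (\<Sum>p\<in>F. (sum_list p - length n) choose i)"
proof -
  define fiber where "fiber p = {Bs. Bs \<subseteq> ferrers_vars n \<and> (\<forall>j<length n. \<exists>l. (j, l) \<in> Bs) \<and>
      column_maxima (length n) Bs = p \<and> card Bs = i + length n}" for p
  have "{Bs. Bs \<subseteq> ferrers_vars n \<and> spans_edge (length n) F Bs \<and> card Bs = i + length n} = (\<Union>p\<in>F. fiber p)"
    unfolding fiber_def spans_edge_def by auto
  moreover have "card (\<Union>p\<in>F. fiber p) = (\<Sum>p\<in>F. card (fiber p))"
  proof (rule card_UN_disjoint[OF finite_ferrers[OF assms]])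
    have "fiber p \<subseteq> Pow (ferrers_vars n)" for p unfolding fiber_def by blast
    then show "\<forall>p\<in>F. finite (fiber p)" using finite_ferrers_vars finite_subset by blast
    show "\<forall>p\<in>F. \<forall>q\<in>F. p \<noteq> q \<longrightarrow> fiber p \<inter> fiber q = {}" unfolding fiber_def by blast
  qed
  ultimately have "card {Bs. Bs \<subseteq> ferrers_vars n \<and> spans_edge (length n) F Bs \<and> card Bs = i + length n} =
      (\<Sum>p\<in>F. card (fiber p))" by simp
  also have "\<dots> = (\<Sum>p\<in>F. (sum_list p - length n) choose i)"
    unfolding fiber_def using ferrers_edge[OF assms] by (intro sum.cong refl card_column_maxima_fiber) auto
  finally show ?thesis .
qed

lemma betti_ferrers_card:
  assumes ferrers: "is_ferrers n F"
  shows "betti K (ferrers_vars n) (ferrers_mem F) i j =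
    (if j = int (i + length n)
     then of_nat (card {Bs. Bs \<subseteq> ferrers_vars n \<and> spans_edge (length n) F Bs \<and> card Bs = i + length n})
     else 0)"
proof -
  let ?V = "ferrers_vars n"
  let ?top = "\<lambda>Bs. spans_edge (length n) F Bs \<and> card Bs = i + length n"
  have "betti K ?V (ferrers_mem F) i j =
      of_nat (\<Sum>Bs | Bs \<subseteq> ?V \<and> int (card Bs) = j. multigraded_betti K ?V (ferrers_mem F) i (indicator Bs))"
    by (rule betti_squarefree_ideal[OF finite_ferrers_vars ferrers_mem_cong])
  also have "\<dots> = of_nat (\<Sum>Bs | Bs \<subseteq> ?V \<and> int (card Bs) = j. if ?top Bs then 1 else 0)"
  proof (intro arg_cong[where f = of_nat] sum.cong refl)
    fix Bs assume "Bs \<in> {Bs. Bs \<subseteq> ?V \<and> int (card Bs) = j}"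
    then interpret ferrers_squarefree_degree n F Bs using ferrers by unfold_locales auto
    show "multigraded_betti K ?V (ferrers_mem F) i (indicator Bs) = (if ?top Bs then 1 else 0)"
      by (subst multigraded_betti_itself) (rule multigraded_betti_squarefree_degree)
  qed
  also have "\<dots> = of_nat (card {Bs. Bs \<subseteq> ?V \<and> int (card Bs) = j \<and> ?top Bs})"
    by (simp add: sum.If_cases finite_ferrers_vars Int_def conj_assoc)
  also have "{Bs. Bs \<subseteq> ?V \<and> int (card Bs) = j \<and> ?top Bs} =
      (if j = int (i + length n) then {Bs. Bs \<subseteq> ?V \<and> ?top Bs} else {})"
    by auto
  finally show ?thesis by simp
qed

lemma ferrers_edge_sum_ge: "is_ferrers n F \<Longrightarrow> p \<in> F \<Longrightarrow> length n \<le> sum_list p"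
proof -
  assume "is_ferrers n F" "p \<in> F"
  then have "length p = length n" "\<forall>j<length p. 1 \<le> p ! j" using ferrers_edge by auto
  then have "(\<Sum>j<length p. 1) \<le> (\<Sum>j<length p. p ! j)" by (intro sum_mono) auto
  then show ?thesis using \<open>length p = length n\<close> by (simp add: sum_list_sum_nth atLeast0LessThan)
qed

lemma alpha_support_eq_image:
  assumes "finite F" "\<And>p. p \<in> F \<Longrightarrow> d \<le> sum_list p"
  shows "{k. alpha F d k \<noteq> 0} = (\<lambda>p. sum_list p - d) ` F"
proof -
  have "alpha F d k \<noteq> 0 \<longleftrightarrow> (\<exists>p\<in>F. sum_list p = k + d)" for k
    unfolding alpha_def using assms(1) by auto
  then show ?thesis using assms(2) by force
qed

lemma sum_edges_by_degree:
  fixes f :: "nat \<Rightarrow> nat"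
  assumes "finite F" "\<And>p. p \<in> F \<Longrightarrow> d \<le> sum_list p"
  shows "(\<Sum>p\<in>F. f (sum_list p - d)) = (\<Sum>k | alpha F d k \<noteq> 0. alpha F d k * f k)"
proof -
  let ?deg = "\<lambda>p. sum_list p - d"
  have fiber: "{p\<in>F. ?deg p = k} = {p\<in>F. sum_list p = k + d}" for k using assms(2) by force
  have "(\<Sum>p\<in>F. f (?deg p)) = (\<Sum>k\<in>?deg ` F. \<Sum>p\<in>{p\<in>F. ?deg p = k}. f (?deg p))"
    by (rule sum.image_gen[OF assms(1)])
  also have "\<dots> = (\<Sum>k\<in>?deg ` F. alpha F d k * f k)"
    unfolding alpha_def fiber[symmetric] by (intro sum.cong refl) simp
  finally show ?thesis using alpha_support_eq_image[OF assms] by simp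
qed

theorem betti_ferrers_ideal:
  assumes "is_ferrers n F"
  shows "betti K (ferrers_vars n) (ferrers_mem F) i j =
    (if j = int (length n) + int i
     then of_nat (\<Sum>k | alpha F (length n) k \<noteq> 0. alpha F (length n) k * (k choose i)) else 0)"
proof -
  have "card {Bs. Bs \<subseteq> ferrers_vars n \<and> spans_edge (length n) F Bs \<and> card Bs = i + length n} =
      (\<Sum>k | alpha F (length n) k \<noteq> 0. alpha F (length n) k * (k choose i))"
    using card_spanning_sets[OF assms]
      sum_edges_by_degree[OF finite_ferrers[OF assms] ferrers_edge_sum_ge[OF assms], of "\<lambda>k. k choose i"]
    by simp
  then show ?thesis unfolding betti_ferrers_card[OF assms] by (simp only:) (simp add: add.commute)
qed

section \<open>Pure diagrams of intervals\<close>

lemma prod_abs_diff_eq_fact: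
  assumes "i \<le> k"
  shows "(\<Prod>l\<in>{0..<Suc k} - {i}. \<bar>int i - int l\<bar>) = fact i * fact (k - i)"
proof -
  have "{0..<Suc k} - {i} = {0..<i} \<union> {Suc i..k}" using assms by auto
  then have "(\<Prod>l\<in>{0..<Suc k} - {i}. \<bar>int i - int l\<bar>) =
      (\<Prod>l\<in>{0..<i} \<union> {Suc i..k}. \<bar>int i - int l\<bar>)" by simp
  also have "\<dots> = (\<Prod>l\<in>{0..<i}. \<bar>int i - int l\<bar>) * (\<Prod>l\<in>{Suc i..k}. \<bar>int i - int l\<bar>)"
    by (rule prod.union_disjoint) auto
  also have "(\<Prod>l\<in>{0..<i}. \<bar>int i - int l\<bar>) = fact i"
    unfolding fact_prod_rev by (auto simp: of_nat_diff intro!: prod.cong)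
  also have "(\<Prod>l\<in>{Suc i..k}. \<bar>int i - int l\<bar>) = (\<Prod>m\<in>{1..k - i}. int m)"
    using prod.shift_bounds_cl_nat_ivl[of "\<lambda>l. \<bar>int i - int l\<bar>" 1 i "k - i"] assms
    by (simp add: add.commute)
  also have "\<dots> = fact (k - i)" by (simp add: fact_prod)
  finally show ?thesis .
qed
lemma pure_diagram_interval:
  "pure_diagram [int d .. int d + int k] i j =
     (if i \<le> k \<and> j = int d + int i then 1 / (fact i * fact (k - i)) else 0)"
proof -
  let ?\<sigma> = "[int d .. int d + int k]"
  have length: "length ?\<sigma> = Suc k" by simp
  have nth: "?\<sigma> ! l = int d + int l" if "l < Suc k" for l using that by simp
  show ?thesis
  proof (cases "i \<le> k \<and> j = int d + int i")
    case True
    then have "pure_diagram ?\<sigma> i j = (\<Prod>l\<in>{0..<Suc k} - {i}. 1 / of_int \<bar>?\<sigma> ! i - ?\<sigma> ! l\<bar>)"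
      unfolding pure_diagram_def length using nth by simp
    also have "\<dots> = (\<Prod>l\<in>{0..<Suc k} - {i}. 1 / of_int \<bar>int i - int l\<bar>)"
      using True nth by (intro prod.cong) auto
    also have "\<dots> = 1 / of_int (\<Prod>l\<in>{0..<Suc k} - {i}. \<bar>int i - int l\<bar>)"
      by (simp add: prod_dividef)
    also have "\<dots> = 1 / (fact i * fact (k - i))" using True by (simp add: prod_abs_diff_eq_fact)
    finally show ?thesis using True by simp
  next
    case False
    then show ?thesis unfolding pure_diagram_def length using nth by auto
  qed
qed

lemma sum_pure_diagrams_interval:
  assumes "finite K"
  shows "(\<Sum>(a, \<sigma>) \<leftarrow> map (\<lambda>k. (c k * fact k, [int d .. int d + int k])) (rev (sorted_list_of_set K)).
            of_nat a * pure_diagram \<sigma> i j) =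
         (if j = int d + int i then of_nat (\<Sum>k\<in>K. c k * (k choose i)) else 0)"
proof -
  have summand: "of_nat (c k * fact k) * pure_diagram [int d .. int d + int k] i j =
      (if j = int d + int i then of_nat (c k * (k choose i)) else 0)" for k
    by (cases "i \<le> k") (auto simp: pure_diagram_interval binomial_fact)
  have "(\<Sum>(a, \<sigma>) \<leftarrow> map (\<lambda>k. (c k * fact k, [int d .. int d + int k])) (rev (sorted_list_of_set K)).
            of_nat a * pure_diagram \<sigma> i j) =
        (\<Sum>k \<leftarrow> sorted_list_of_set K. of_nat (c k * fact k) * pure_diagram [int d .. int d + int k] i j)"
    by (simp add: rev_map[symmetric] comp_def sum_list_rev)
  also have "\<dots> = (\<Sum>k\<in>K. of_nat (c k * fact k) * pure_diagram [int d .. int d + int k] i j)"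
    using assms by (simp add: sum_list_distinct_conv_sum_set)
  finally show ?thesis unfolding summand by (simp add: of_nat_sum)
qed

lemma sorted_pure_diagrams_interval:
  "sorted_wrt (\<lambda>x y. pure_le (snd x) (snd y) \<and> snd x \<noteq> snd y)
     (map (\<lambda>k. (a k, [int d .. int d + int k])) (rev (sorted_list_of_set K)))"
proof -
  have "sorted_wrt (<) (sorted_list_of_set K)" by simp
  then have "sorted_wrt (\<lambda>k1 k2. pure_le [int d .. int d + int k2] [int d .. int d + int k1] \<and>
      [int d .. int d + int k2] \<noteq> [int d .. int d + int k1]) (sorted_list_of_set K)"
    by (rule sorted_wrt_mono_rel[rotated]) (auto simp: pure_le_def dest: arg_cong[of _ _ length])
  then show ?thesis by (simp add: sorted_wrt_map sorted_wrt_rev)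
qed

theorem proposition3p2:
  fixes K :: "'k::field itself" and n :: "nat list" and F :: "nat list set"
  assumes "1 \<le> length n" and "is_ferrers n F"
  shows "bs_decomposition (betti K (ferrers_vars n) (ferrers_mem F))
           (map (\<lambda>k. (alpha F (length n) k * fact k, [int (length n) .. int (length n) + int k]))
                (rev (sorted_list_of_set {k. alpha F (length n) k \<noteq> 0})))"
proof -
  let ?support = "{k. alpha F (length n) k \<noteq> 0}"
  have "?support = (\<lambda>p. sum_list p - length n) ` F"
    using finite_ferrers[OF assms(2)] ferrers_edge_sum_ge[OF assms(2)] by (rule alpha_support_eq_image)
  then have "finite ?support" using finite_ferrers[OF assms(2)] by simp
  show ?thesis
    unfolding bs_decomposition_def
  proof (intro conjI allI)
    show "\<forall>(a, \<sigma>)\<in>set (map (\<lambda>k. (alpha F (length n) k * fact k, [int (length n) .. int (length n) + int k]))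
        (rev (sorted_list_of_set ?support))). 0 < a \<and> is_degree_seq \<sigma>"
      using \<open>finite ?support\<close> by (auto simp: is_degree_seq_def)
    fix i j
    show "betti K (ferrers_vars n) (ferrers_mem F) i j =
        (\<Sum>(a, \<sigma>) \<leftarrow> map (\<lambda>k. (alpha F (length n) k * fact k, [int (length n) .. int (length n) + int k]))
          (rev (sorted_list_of_set ?support)). of_nat a * pure_diagram \<sigma> i j)"
      unfolding betti_ferrers_ideal[OF assms(2)] sum_pure_diagrams_interval[OF \<open>finite ?support\<close>] ..
  qed (rule sorted_pure_diagrams_interval)
qed

end
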